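(* Let $T\in\mathbb{R}^{d\times d\times d}$ have nonnegative entries, let $C^{(1)}_{1},\ldots,C^{(1)}_{d}$ and $C^{(2)}_{1},\ldots,C^{(2)}_{d}$ be $r\times r$ real symmetric positive definite matrices, fix $i_3\in[d]$, and let $\mathcal{A}:\mathbb{S}^r\to\mathbb{R}^{d^2}$ be $X\mapsto(\langle X,C^{(1)}_{i_1}\circ C^{(2)}_{i_2}\rangle)_{i_1,i_2\in[d]}$. Let $t=\operatorname{vec}(T_{::i_3})=(T_{i_1i_2i_3})_{i_1,i_2}$. Then $\mathcal{A}^\top t=\sum_{i_1,i_2}T_{i_1i_2i_3}C^{(1)}_{i_1}\circ C^{(2)}_{i_2}$ is positive semidefinite, and for every positive definite $C_{\mathrm{old}}$ the update $C_{\mathrm{new}}=W(\mathcal{A}^\top t)W$, $W=([\mathcal{A}^\top\mathcal{A}](C_{\mathrm{old}}))^{-1}\#C_{\mathrm{old}}$, yields a positive semidefinite matrix satisfying $\|t-\mathcal{A}(C_{\mathrm{new}})\|_2^2\le\|t-\mathcal{A}(C_{\mathrm{old}})\|_2^2$.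
   Context: $\circ$ denotes the Schur (entrywise) product of matrices, $\langle Y,Z\rangle=\operatorname{tr}(YZ)$ on the space $\mathbb{S}^r$ of $r\times r$ real symmetric matrices. The adjoint is $\mathcal{A}^\top(y)=\sum_{i_1,i_2}y_{i_1i_2}C^{(1)}_{i_1}\circ C^{(2)}_{i_2}$ and $[\mathcal{A}^\top\mathcal{A}](Z)=\mathcal{A}^\top(\mathcal{A}(Z))$. For positive definite $C,D$, $C\# D=C^{1/2}(C^{-1/2}DC^{-1/2})^{1/2}C^{1/2}$ is the matrix geometric mean. *)

theory Defs
  imports "HOL-Analysis.Analysis"
begin

text \<open>Real r x r matrices are modelled as real^'r^'r for a finite index type 'r;
  the index set [d] is a finite type 'd.\<close>

definition sym_mat :: "real^'r^'r \<Rightarrow> bool" where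
  "sym_mat M \<longleftrightarrow> transpose M = M"

definition psd_mat :: "real^'r^'r \<Rightarrow> bool" where
  "psd_mat M \<longleftrightarrow> sym_mat M \<and> (\<forall>x. 0 \<le> x \<bullet> (M *v x))"

definition pd_mat :: "real^'r^'r \<Rightarrow> bool" where
  "pd_mat M \<longleftrightarrow> sym_mat M \<and> (\<forall>x. x \<noteq> 0 \<longrightarrow> 0 < x \<bullet> (M *v x))"

definition schur :: "real^'r^'r \<Rightarrow> real^'r^'r \<Rightarrow> real^'r^'r" where
  "schur A B = (\<chi> i j. A $ i $ j * B $ i $ j)"

definition tr_inner :: "real^'r^'r \<Rightarrow> real^'r^'r \<Rightarrow> real" where
  "tr_inner Y Z = trace (Y ** Z)"

definition Aop :: "('d \<Rightarrow> real^'r^'r) \<Rightarrow> ('d \<Rightarrow> real^'r^'r) \<Rightarrow> real^'r^'r \<Rightarrow> ('d \<Rightarrow> 'd \<Rightarrow> real)" where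
  "Aop C1 C2 X = (\<lambda>i1 i2. tr_inner X (schur (C1 i1) (C2 i2)))"

definition Aadj :: "('d::finite \<Rightarrow> real^'r^'r) \<Rightarrow> ('d \<Rightarrow> real^'r^'r) \<Rightarrow> ('d \<Rightarrow> 'd \<Rightarrow> real) \<Rightarrow> real^'r^'r" where
  "Aadj C1 C2 y = (\<Sum>i1\<in>UNIV. \<Sum>i2\<in>UNIV. y i1 i2 *\<^sub>R schur (C1 i1) (C2 i2))"

definition sqnorm2 :: "('d::finite \<Rightarrow> 'd \<Rightarrow> real) \<Rightarrow> real" where
  "sqnorm2 v = (\<Sum>i1\<in>UNIV. \<Sum>i2\<in>UNIV. (v i1 i2)^2)"

definition msqrt :: "real^'r^'r \<Rightarrow> real^'r^'r" where
  "msqrt M = (THE S. psd_mat S \<and> S ** S = M)"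

definition gmean :: "real^'r^'r \<Rightarrow> real^'r^'r \<Rightarrow> real^'r^'r" where
  "gmean C D = (let Ch = msqrt C; Chi = matrix_inv Ch in Ch ** msqrt (Chi ** D ** Chi) ** Ch)"

end

theory Submission
  imports Defs
begin

text \<open>Each \<open>A\<^sub>p = C1\<^sub>i\<^sub>1 \<circ> C2\<^sub>i\<^sub>2\<close> is positive definite by the Schur product theorem, so
  \<open>\<A>\<^sup>T t\<close> is a nonnegative combination of positive definite matrices. The geometric mean \<open>W\<close> is the
  positive definite solution of the Riccati equation \<open>W M W = C\<^sub>o\<^sub>l\<^sub>d\<close>, \<open>M = [\<A>\<^sup>T\<A>](C\<^sub>o\<^sub>l\<^sub>d)\<close>.
  After the change of variables \<open>X \<mapsto> P\<^sup>-\<^sup>1 X P\<^sup>-\<^sup>1\<close>, \<open>A\<^sub>p \<mapsto> B\<^sub>p = P A\<^sub>p P\<close> with \<open>P = W\<^sup>1\<^sup>/\<^sup>2\<close>,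
  \<open>C\<^sub>o\<^sub>l\<^sub>d\<close> becomes a positive definite fixed point \<open>Z\<close> of \<open>T = L\<^sup>T L\<close>, \<open>L X = (\<langle>X, B\<^sub>p\<rangle>)\<^sub>p\<close>,
  and \<open>C\<^sub>n\<^sub>e\<^sub>w\<close> becomes \<open>L\<^sup>T t\<close>. The map \<open>T\<close> is self-adjoint and preserves the positive
  semidefinite cone, hence also the sandwich \<open>-c Z \<le> Y \<le> c Z\<close>; so its orbits are bounded and, by
  log-convexity of \<open>n \<mapsto> \<parallel>T\<^sup>n Y\<parallel>\<close>, \<open>\<parallel>L Y\<parallel>\<^sup>2 = \<langle>T Y, Y\<rangle> \<le> \<parallel>Y\<parallel>\<^sup>2\<close>. Expanding the squares then gives
  \<open>\<parallel>t - L Z\<parallel>\<^sup>2 - \<parallel>t - L L\<^sup>T t\<parallel>\<^sup>2 \<ge> \<parallel>Z - L\<^sup>T t\<parallel>\<^sup>2 \<ge> 0\<close>.\<close>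

lemma quadratic_nonneg_imp_linear_coeff_zero:
  fixes a b :: real
  assumes nonneg: "\<And>t. 0 \<le> 2*t*a + t^2*b"
  shows "a = 0"
proof (rule ccontr)
  assume "a \<noteq> 0"
  hence a2: "a^2 > 0" by simp
  define c where "c = \<bar>b\<bar> + 1"
  have c0: "c > 0" unfolding c_def by simp
  have "2*(-a/c)*a + (-a/c)^2*b = a^2 * (b - 2*c) / c^2"
    using c0 by (simp add: field_simps power2_eq_square)
  also have "\<dots> < 0"
    using a2 c0 by (intro divide_neg_pos mult_pos_neg) (auto simp: c_def)
  finally show False using nonneg[of "-a/c"] by linarith
qed

lemma inner_symmetric_matrix_vector:
  fixes A :: "real^'n^'n"
  assumes "transpose A = A"
  shows "x \<bullet> (A *v y) = (A *v x) \<bullet> y"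
  by (metis assms dot_lmul_matrix transpose_matrix_vector)

lemma symmetric_matrix_entry:
  "transpose (A::'a::semiring_1^'n^'n) = A \<Longrightarrow> A$i$j = A$j$i"
  by (metis transpose_def vec_lambda_beta)

lemma transpose_add_matrix: "transpose ((A::real^'n^'m) + B) = transpose A + transpose B"
  by (simp add: transpose_def vec_eq_iff)

lemma transpose_diff_matrix: "transpose ((A::real^'n^'m) - B) = transpose A - transpose B"
  by (simp add: transpose_def vec_eq_iff)

lemma transpose_sum_matrix: "transpose (\<Sum>i\<in>I. (M i::real^'n^'m)) = (\<Sum>i\<in>I. transpose (M i))"
  by (simp add: transpose_def vec_eq_iff)

lemma psd_mat_transpose: "psd_mat M \<Longrightarrow> transpose M = M"
  by (simp add: psd_mat_def sym_mat_def)

lemma pd_mat_transpose: "pd_mat M \<Longrightarrow> transpose M = M"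
  by (simp add: pd_mat_def sym_mat_def)

lemma psd_mat_nonneg: "psd_mat M \<Longrightarrow> 0 \<le> x \<bullet> (M *v x)"
  by (simp add: psd_mat_def)

lemma pd_imp_psd_mat: "pd_mat M \<Longrightarrow> psd_mat M"
  unfolding pd_mat_def psd_mat_def by (metis inner_zero_left order_le_less)

lemma psd_mat_zero_form_imp_kernel:
  fixes M :: "real^'n^'n"
  assumes M: "psd_mat M" and x: "x \<bullet> (M *v x) = 0"
  shows "M *v x = 0"
proof -
  have "y \<bullet> (M *v x) = 0" for y
  proof (rule quadratic_nonneg_imp_linear_coeff_zero)
    fix t :: real
    have "x \<bullet> (M *v y) = y \<bullet> (M *v x)"
      using inner_symmetric_matrix_vector[OF psd_mat_transpose[OF M], of x y] by (simp add: inner_commute)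
    moreover have "0 \<le> (x + t *\<^sub>R y) \<bullet> (M *v (x + t *\<^sub>R y))"
      using M by (rule psd_mat_nonneg)
    ultimately show "0 \<le> 2*t*(y \<bullet> (M *v x)) + t^2 * (y \<bullet> (M *v y))"
      using x by (simp add: matrix_vector_right_distrib matrix_vector_mult_scaleR inner_add_left
          inner_add_right power2_eq_square algebra_simps)
  qed
  from this[of "M *v x"] show ?thesis by simp
qed

section \<open>The spectral theorem\<close>

text \<open>A maximiser of the Rayleigh quotient on the unit sphere of an invariant subspace is an
  eigenvector: its first variation in any direction \<open>w\<close> of the subspace orthogonal to it vanishes.\<close>

lemma symmetric_eigenvector_in_invariant_subspace:
  fixes A :: "real^'n^'n"
  assumes sym: "transpose A = A" and S: "subspace S" and inv: "\<And>x. x \<in> S \<Longrightarrow> A *v x \<in> S"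
    and x0: "x0 \<in> S" "x0 \<noteq> 0"
  shows "\<exists>v\<in>S. norm v = 1 \<and> A *v v = (v \<bullet> (A *v v)) *\<^sub>R v"
proof -
  let ?K = "S \<inter> sphere 0 1"
  have cK: "compact ?K" using closed_subspace[OF S] compact_sphere by (simp add: closed_Int_compact)
  have "x0 /\<^sub>R norm x0 \<in> ?K" using x0 S by (simp add: subspace_scale)
  hence neK: "?K \<noteq> {}" by blast
  have cont: "continuous_on ?K (\<lambda>y. y \<bullet> (A *v y))"
    by (intro continuous_intros linear_continuous_on bounded_linear.linear matrix_vector_mul_bounded_linear)
      (simp add: bounded_linear.continuous_on continuous_on_id)
  obtain u where u: "u \<in> ?K" and umax: "\<And>y. y \<in> ?K \<Longrightarrow> y \<bullet> (A *v y) \<le> u \<bullet> (A *v u)"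
    using continuous_attains_sup[OF cK neK cont] by blast
  define mu where "mu = u \<bullet> (A *v u)"
  have uS: "u \<in> S" and uu: "u \<bullet> u = 1" using u by (auto simp: dot_square_norm)
  have rayleigh: "y \<bullet> (A *v y) \<le> mu * (y \<bullet> y)" if "y \<in> S" for y
  proof (cases "y = 0")
    case False
    have "y /\<^sub>R norm y \<in> ?K" using False \<open>y \<in> S\<close> S by (simp add: subspace_scale)
    hence "(y /\<^sub>R norm y) \<bullet> (A *v (y /\<^sub>R norm y)) \<le> mu" using umax mu_def by blast
    moreover have "(y /\<^sub>R norm y) \<bullet> (A *v (y /\<^sub>R norm y)) = (y \<bullet> (A *v y)) / (y \<bullet> y)"
      by (simp add: matrix_vector_mult_scaleR dot_square_norm power2_eq_square divide_inverse)
    ultimately show ?thesis using False by (simp add: divide_le_eq mult.commute)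
  qed simp
  define w where "w = A *v u - mu *\<^sub>R u"
  have wS: "w \<in> S" unfolding w_def using inv[OF uS] uS S by (simp add: subspace_diff subspace_scale)
  have uw: "u \<bullet> w = 0" unfolding w_def using uu mu_def by (simp add: inner_diff_right)
  have Au: "A *v u = w + mu *\<^sub>R u" unfolding w_def by simp
  have wAu: "w \<bullet> (A *v u) = w \<bullet> w"
    unfolding Au using uw by (simp add: inner_add_right inner_commute)
  have uAw: "u \<bullet> (A *v w) = w \<bullet> w"
    using inner_symmetric_matrix_vector[OF sym, of u w] wAu by (simp add: inner_commute)
  have key: "0 \<le> 2*t*(- (w \<bullet> w)) + t^2 * (mu * (w \<bullet> w) - w \<bullet> (A *v w))" for t
  proof -
    have "u + t *\<^sub>R w \<in> S" using uS wS S by (simp add: subspace_add subspace_scale)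
    moreover have "(u + t *\<^sub>R w) \<bullet> (A *v (u + t *\<^sub>R w)) = mu + 2*t*(w \<bullet> w) + t^2 * (w \<bullet> (A *v w))"
      using wAu uAw by (simp add: matrix_vector_right_distrib matrix_vector_mult_scaleR inner_add_left
          inner_add_right mu_def power2_eq_square algebra_simps)
    moreover have "(u + t *\<^sub>R w) \<bullet> (u + t *\<^sub>R w) = 1 + t^2 * (w \<bullet> w)"
      using uu uw by (simp add: inner_add_left inner_add_right inner_commute power2_eq_square)
    ultimately show ?thesis using rayleigh[of "u + t *\<^sub>R w"] by (simp add: algebra_simps)
  qed
  have "- (w \<bullet> w) = 0" by (rule quadratic_nonneg_imp_linear_coeff_zero[OF key])
  hence "A *v u = mu *\<^sub>R u" unfolding w_def by simp
  moreover have "norm u = 1" using u by simp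
  ultimately show ?thesis using uS mu_def by blast
qed

definition orthonormal_eigenbasis :: "real^'n^'n \<Rightarrow> (real^'n) set \<Rightarrow> bool" where
  "orthonormal_eigenbasis A B \<longleftrightarrow> finite B \<and> card B = CARD('n) \<and> pairwise orthogonal B \<and>
     (\<forall>v\<in>B. norm v = 1 \<and> A *v v = (v \<bullet> (A *v v)) *\<^sub>R v)"

lemma orthonormal_eigenvectors_exist:
  fixes A :: "real^'n^'n"
  assumes sym: "transpose A = A" and "k \<le> CARD('n)"
  shows "\<exists>B. finite B \<and> card B = k \<and> pairwise orthogonal B \<and>
     (\<forall>v\<in>B. norm v = 1 \<and> A *v v = (v \<bullet> (A *v v)) *\<^sub>R v)"
  using \<open>k \<le> CARD('n)\<close>
proof (induction k)
  case 0 show ?case by (auto intro!: exI[of _ "{}"])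
next
  case (Suc k)
  then obtain B where B: "finite B" "card B = k" "pairwise orthogonal B"
     "\<forall>v\<in>B. norm v = 1 \<and> A *v v = (v \<bullet> (A *v v)) *\<^sub>R v" by auto
  have "dim B < DIM(real^'n)" using dim_le_card[of B B] B Suc.prems by (simp add: span_superset)
  then obtain x where x: "x \<noteq> 0" "\<And>y. y \<in> span B \<Longrightarrow> orthogonal x y"
    using orthogonal_to_subspace_exists by blast
  define S where "S = {x. \<forall>v\<in>B. v \<bullet> x = 0}"
  have "subspace S" unfolding S_def subspace_def by (auto simp: inner_add_right)
  moreover have "x \<in> S" unfolding S_def using x(2) span_base by (force simp: orthogonal_def inner_commute)
  moreover have "A *v y \<in> S" if "y \<in> S" for y
  proof -
    have "v \<bullet> (A *v y) = (v \<bullet> (A *v v)) * (v \<bullet> y)" if "v \<in> B" for v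
      using B(4) that inner_symmetric_matrix_vector[OF sym, of v y] by (metis inner_scaleR_left)
    thus ?thesis using \<open>y \<in> S\<close> unfolding S_def by simp
  qed
  ultimately obtain u where u: "u \<in> S" "norm u = 1" "A *v u = (u \<bullet> (A *v u)) *\<^sub>R u"
    using symmetric_eigenvector_in_invariant_subspace[OF sym _ _ _ x(1)] by blast
  have "u \<notin> B" using u unfolding S_def by (auto simp: dot_square_norm)
  moreover have "pairwise orthogonal (insert u B)"
    using B(3) u(1) unfolding S_def by (auto simp: pairwise_insert orthogonal_def inner_commute)
  ultimately show ?case
    using B u by (intro exI[of _ "insert u B"]) auto
qed

lemma orthonormal_eigenbasis_exists:
  fixes A :: "real^'n^'n"
  assumes "transpose A = A"
  shows "\<exists>B. orthonormal_eigenbasis A B"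
  using orthonormal_eigenvectors_exist[OF assms order_refl] unfolding orthonormal_eigenbasis_def by auto

lemma orthonormal_eigenbasis_inner:
  assumes "orthonormal_eigenbasis A B" "v \<in> B" "w \<in> B"
  shows "v \<bullet> w = (if v = w then 1 else 0)"
  using assms unfolding orthonormal_eigenbasis_def pairwise_def orthogonal_def
  by (auto simp: dot_square_norm)

lemma orthonormal_eigenbasis_inner_sum:
  assumes E: "orthonormal_eigenbasis A B" and w: "w \<in> B"
  shows "w \<bullet> (\<Sum>v\<in>B. f v *\<^sub>R v) = f w"
proof -
  have "w \<bullet> (\<Sum>v\<in>B. f v *\<^sub>R v) = (\<Sum>v\<in>B. if w = v then f v else 0)"
    by (simp add: inner_sum_right orthonormal_eigenbasis_inner[OF E w] if_distrib cong: if_cong)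
  thus ?thesis using w E by (simp add: orthonormal_eigenbasis_def)
qed

lemma orthonormal_eigenbasis_expansion:
  fixes A :: "real^'n^'n"
  assumes E: "orthonormal_eigenbasis A B"
  shows "x = (\<Sum>v\<in>B. (v \<bullet> x) *\<^sub>R v)"
proof -
  have "0 \<notin> B" using E unfolding orthonormal_eigenbasis_def by force
  hence "independent B"
    using E unfolding orthonormal_eigenbasis_def by (intro pairwise_orthogonal_independent) auto
  hence "span B = UNIV"
    using E card_eq_dim[of B UNIV] unfolding orthonormal_eigenbasis_def by (auto simp: dim_UNIV)
  moreover define y where "y = x - (\<Sum>v\<in>B. (v \<bullet> x) *\<^sub>R v)"
  moreover have "orthogonal y w" if "w \<in> B" for w
    unfolding y_def orthogonal_def
    using orthonormal_eigenbasis_inner_sum[OF E that, of "\<lambda>v. v \<bullet> x"]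
    by (simp add: inner_diff_right inner_commute)
  ultimately have "orthogonal y y" using orthogonal_to_span[of y B y] by (simp add: orthogonal_commute)
  thus ?thesis unfolding y_def by (simp add: orthogonal_def)
qed

lemma orthonormal_eigenbasis_matrix_vector:
  fixes A :: "real^'n^'n"
  assumes E: "orthonormal_eigenbasis A B"
  shows "A *v x = (\<Sum>v\<in>B. ((v \<bullet> (A *v v)) * (v \<bullet> x)) *\<^sub>R v)"
proof -
  have "A *v x = (\<Sum>v\<in>B. (v \<bullet> x) *\<^sub>R (A *v v))"
    by (subst orthonormal_eigenbasis_expansion[OF E, of x])
      (simp add: linear_sum[OF matrix_vector_mul_linear] matrix_vector_mult_scaleR)
  also have "\<dots> = (\<Sum>v\<in>B. ((v \<bullet> (A *v v)) * (v \<bullet> x)) *\<^sub>R v)"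
    using E unfolding orthonormal_eigenbasis_def by (intro sum.cong refl) (metis scaleR_scaleR mult.commute)
  finally show ?thesis .
qed

section \<open>The positive semidefinite square root\<close>

lemma outer_product_sum_matrix_vector:
  fixes B :: "(real^'n) set"
  shows "(\<chi> i j. \<Sum>v\<in>B. c v * v$i * v$j) *v x = (\<Sum>v\<in>B. (c v * (v \<bullet> x)) *\<^sub>R v)"
proof -
  have "((\<chi> i j. \<Sum>v\<in>B. c v * v$i * v$j) *v x) $ i = (\<Sum>v\<in>B. (c v * (v \<bullet> x)) * v$i)" for i
  proof -
    have "((\<chi> i j. \<Sum>v\<in>B. c v * v$i * v$j) *v x) $ i = (\<Sum>j\<in>UNIV. \<Sum>v\<in>B. c v * v$i * v$j * x$j)"
      by (simp add: matrix_vector_mult_def sum_distrib_right)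
    also have "\<dots> = (\<Sum>v\<in>B. \<Sum>j\<in>UNIV. (c v * v$i) * (v$j * x$j))"
      by (subst sum.swap) (simp add: mult.assoc)
    also have "\<dots> = (\<Sum>v\<in>B. (c v * v$i) * (v \<bullet> x))"
      by (simp add: inner_vec_def sum_distrib_left)
    finally show ?thesis by (simp add: mult_ac)
  qed
  thus ?thesis by (simp add: vec_eq_iff sum_component)
qed

definition eigen_sqrt :: "real^'n^'n \<Rightarrow> (real^'n) set \<Rightarrow> real^'n^'n" where
  "eigen_sqrt A B = (\<chi> i j. \<Sum>v\<in>B. sqrt (v \<bullet> (A *v v)) * v$i * v$j)"

lemma eigen_sqrt_matrix_vector:
  "eigen_sqrt A B *v x = (\<Sum>v\<in>B. (sqrt (v \<bullet> (A *v v)) * (v \<bullet> x)) *\<^sub>R v)"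
  unfolding eigen_sqrt_def by (rule outer_product_sum_matrix_vector)

lemma psd_mat_eigen_sqrt:
  assumes nonneg: "\<And>v. v \<in> B \<Longrightarrow> 0 \<le> v \<bullet> (A *v v)"
  shows "psd_mat (eigen_sqrt A B)"
  unfolding psd_mat_def sym_mat_def
proof
  show "transpose (eigen_sqrt A B) = eigen_sqrt A B"
    by (simp add: eigen_sqrt_def transpose_def vec_eq_iff mult.commute mult.left_commute)
  have "x \<bullet> (eigen_sqrt A B *v x) = (\<Sum>v\<in>B. sqrt (v \<bullet> (A *v v)) * (v \<bullet> x)^2)" for x
    by (simp add: eigen_sqrt_matrix_vector inner_sum_right power2_eq_square inner_commute mult.assoc)
  thus "\<forall>x. 0 \<le> x \<bullet> (eigen_sqrt A B *v x)" using nonneg by (simp add: sum_nonneg)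
qed

lemma eigen_sqrt_square:
  assumes E: "orthonormal_eigenbasis A B" and nonneg: "\<And>v. v \<in> B \<Longrightarrow> 0 \<le> v \<bullet> (A *v v)"
  shows "eigen_sqrt A B ** eigen_sqrt A B = A"
proof -
  have "(eigen_sqrt A B ** eigen_sqrt A B) *v x = A *v x" for x
  proof -
    have "(eigen_sqrt A B ** eigen_sqrt A B) *v x = eigen_sqrt A B *v (eigen_sqrt A B *v x)"
      by (rule matrix_vector_mul_assoc[symmetric])
    also have "\<dots> = (\<Sum>w\<in>B. (sqrt (w \<bullet> (A *v w)) * (sqrt (w \<bullet> (A *v w)) * (w \<bullet> x))) *\<^sub>R w)"
      unfolding eigen_sqrt_matrix_vector
      by (rule sum.cong[OF refl]) (simp add: orthonormal_eigenbasis_inner_sum[OF E])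
    also have "\<dots> = (\<Sum>w\<in>B. ((w \<bullet> (A *v w)) * (w \<bullet> x)) *\<^sub>R w)"
      by (rule sum.cong[OF refl]) (simp add: nonneg mult.assoc[symmetric])
    also have "\<dots> = A *v x" by (rule orthonormal_eigenbasis_matrix_vector[OF E, symmetric])
    finally show ?thesis .
  qed
  thus ?thesis by (simp add: matrix_eq)
qed

lemma psd_root_on_eigenvector:
  fixes S :: "real^'n^'n"
  assumes S: "psd_mat S" and v: "(S ** S) *v v = l *\<^sub>R v" and l: "0 \<le> l"
  shows "S *v v = sqrt l *\<^sub>R v"
proof -
  define mu where "mu = sqrt l"
  have mu: "0 \<le> mu" "mu * mu = l" unfolding mu_def using l by simp_all
  define y where "y = S *v v - mu *\<^sub>R v"
  have SSv: "S *v (S *v v) = l *\<^sub>R v" using v by (simp add: matrix_vector_mul_assoc)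
  have Sy: "S *v y = - mu *\<^sub>R y"
    unfolding y_def using SSv mu
    by (simp add: matrix_vector_mult_diff_distrib matrix_vector_mult_scaleR scaleR_diff_right)
  have "y \<bullet> y = 0"
  proof (cases "mu = 0")
    case True
    have "y \<bullet> y = v \<bullet> (S *v (S *v v))"
      unfolding y_def True using inner_symmetric_matrix_vector[OF psd_mat_transpose[OF S]] by simp
    thus ?thesis using SSv True mu by simp
  next
    case False
    have "0 \<le> y \<bullet> (S *v y)" using S by (rule psd_mat_nonneg)
    hence "mu * (y \<bullet> y) \<le> 0" unfolding Sy by simp
    thus ?thesis using False mu(1) inner_ge_zero[of y] by (simp add: mult_le_0_iff)
  qed
  thus ?thesis unfolding y_def mu_def by simp
qed

lemma psd_root_eq_eigen_sqrt:
  fixes S :: "real^'n^'n"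
  assumes S: "psd_mat S" and E: "orthonormal_eigenbasis (S ** S) B"
  shows "S = eigen_sqrt (S ** S) B"
proof -
  have "S *v x = eigen_sqrt (S ** S) B *v x" for x
  proof -
    have "S *v x = (\<Sum>v\<in>B. (v \<bullet> x) *\<^sub>R (S *v v))"
      by (subst orthonormal_eigenbasis_expansion[OF E, of x])
        (simp add: linear_sum[OF matrix_vector_mul_linear] matrix_vector_mult_scaleR)
    also have "\<dots> = (\<Sum>v\<in>B. (sqrt (v \<bullet> ((S ** S) *v v)) * (v \<bullet> x)) *\<^sub>R v)"
    proof (rule sum.cong[OF refl])
      fix v assume "v \<in> B"
      hence eig: "(S ** S) *v v = (v \<bullet> ((S ** S) *v v)) *\<^sub>R v"
        using E unfolding orthonormal_eigenbasis_def by blast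
      have "v \<bullet> ((S ** S) *v v) = (S *v v) \<bullet> (S *v v)"
        using inner_symmetric_matrix_vector[OF psd_mat_transpose[OF S]]
        by (simp add: matrix_vector_mul_assoc[symmetric])
      hence "0 \<le> v \<bullet> ((S ** S) *v v)" by simp
      from psd_root_on_eigenvector[OF S eig this]
      show "(v \<bullet> x) *\<^sub>R (S *v v) = (sqrt (v \<bullet> ((S ** S) *v v)) * (v \<bullet> x)) *\<^sub>R v"
        by (simp add: mult.commute)
    qed
    also have "\<dots> = eigen_sqrt (S ** S) B *v x" by (simp add: eigen_sqrt_matrix_vector)
    finally show ?thesis .
  qed
  thus ?thesis by (simp add: matrix_eq)
qed

lemma msqrt_unique:
  assumes S: "psd_mat S" and SS: "S ** S = A"
  shows "msqrt A = S"
  unfolding msqrt_def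
proof (rule the_equality)
  show "psd_mat S \<and> S ** S = A" using S SS by simp
  have "transpose A = A"
    by (simp add: SS[symmetric] matrix_transpose_mul psd_mat_transpose[OF S])
  then obtain B where "orthonormal_eigenbasis A B" using orthonormal_eigenbasis_exists by blast
  thus "R = S" if "psd_mat R \<and> R ** R = A" for R
    using that psd_root_eq_eigen_sqrt[of R B] psd_root_eq_eigen_sqrt[OF S, of B] SS by auto
qed

lemma
  assumes A: "psd_mat A"
  shows psd_mat_msqrt: "psd_mat (msqrt A)" and msqrt_square: "msqrt A ** msqrt A = A"
proof -
  obtain B where E: "orthonormal_eigenbasis A B"
    using orthonormal_eigenbasis_exists[OF psd_mat_transpose[OF A]] by blast
  have nonneg: "\<And>v. 0 \<le> v \<bullet> (A *v v)" using psd_mat_nonneg[OF A] by blast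
  have "msqrt A = eigen_sqrt A B"
    by (rule msqrt_unique[OF psd_mat_eigen_sqrt eigen_sqrt_square[OF E]]) (simp_all add: nonneg)
  thus "psd_mat (msqrt A)" "msqrt A ** msqrt A = A"
    using psd_mat_eigen_sqrt[of B A] eigen_sqrt_square[OF E] nonneg by auto
qed

lemma
  fixes A :: "real^'n^'n"
  assumes "invertible A"
  shows matrix_inv_right: "A ** matrix_inv A = mat 1"
    and matrix_inv_left: "matrix_inv A ** A = mat 1"
proof -
  have "\<exists>A'. A ** A' = mat 1 \<and> A' ** A = mat 1" using assms unfolding invertible_def by blast
  hence "A ** matrix_inv A = mat 1 \<and> matrix_inv A ** A = mat 1" unfolding matrix_inv_def by (rule someI_ex)
  thus "A ** matrix_inv A = mat 1" "matrix_inv A ** A = mat 1" by auto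
qed

lemma matrix_inv_unique:
  fixes A B :: "real^'n^'n"
  assumes AB: "A ** B = mat 1"
  shows "matrix_inv A = B"
proof -
  have "invertible A" using AB matrix_left_right_inverse unfolding invertible_def by blast
  hence "matrix_inv A ** (A ** B) = B" by (simp add: matrix_mul_assoc matrix_inv_left)
  thus ?thesis using AB by simp
qed

lemma invertible_matrix_inv:
  fixes A :: "real^'n^'n"
  assumes "invertible A"
  shows "invertible (matrix_inv A)"
  using matrix_inv_left[OF assms] matrix_inv_right[OF assms] unfolding invertible_def by blast

lemma matrix_inv_matrix_inv:
  fixes A :: "real^'n^'n"
  assumes "invertible A"
  shows "matrix_inv (matrix_inv A) = A"
  using matrix_inv_left[OF assms] by (rule matrix_inv_unique)

lemma matrix_inv_transpose_eq:
  fixes A :: "real^'n^'n"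
  assumes sym: "transpose A = A" and inv: "invertible A"
  shows "transpose (matrix_inv A) = matrix_inv A"
proof -
  have "A ** transpose (matrix_inv A) = mat 1"
    using matrix_transpose_mul[of "matrix_inv A" A] matrix_inv_left[OF inv] sym by simp
  thus ?thesis using matrix_inv_unique by metis
qed

lemma pd_mat_invertible:
  fixes M :: "real^'n^'n"
  assumes M: "pd_mat M"
  shows "invertible M"
proof -
  have "inj ((*v) M)"
  proof (rule injI)
    fix x y assume "M *v x = M *v y"
    hence "(x - y) \<bullet> (M *v (x - y)) = 0" by (simp add: matrix_vector_mult_diff_distrib)
    thus "x = y" using M unfolding pd_mat_def by (metis less_irrefl right_minus_eq)
  qed
  thus ?thesis using matrix_left_invertible_injective invertible_left_inverse by blast
qed

lemma pd_mat_iff_psd_invertible: "pd_mat (M::real^'n^'n) \<longleftrightarrow> psd_mat M \<and> invertible M"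
proof (intro iffI conjI)
  assume M: "psd_mat M \<and> invertible M"
  have "0 < x \<bullet> (M *v x)" if "x \<noteq> 0" for x
  proof -
    have "x \<bullet> (M *v x) \<noteq> 0"
    proof
      assume "x \<bullet> (M *v x) = 0"
      hence "M *v x = 0" using psd_mat_zero_form_imp_kernel M by blast
      hence "matrix_inv M *v (M *v x) = 0" by simp
      thus False using that matrix_inv_left[of M] M by (simp add: matrix_vector_mul_assoc)
    qed
    thus ?thesis using psd_mat_nonneg[of M x] M by (simp add: order_less_le)
  qed
  thus "pd_mat M" using M unfolding pd_mat_def psd_mat_def by blast
qed (simp_all add: pd_imp_psd_mat pd_mat_invertible)

lemma psd_mat_congruence:
  fixes P Q :: "real^'n^'n"
  assumes P: "psd_mat P" and Q: "transpose Q = Q"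
  shows "psd_mat (Q ** P ** Q)"
  unfolding psd_mat_def sym_mat_def
proof (intro conjI allI)
  show "transpose (Q ** P ** Q) = Q ** P ** Q"
    by (simp add: matrix_transpose_mul Q psd_mat_transpose[OF P] matrix_mul_assoc)
  fix x
  have "x \<bullet> ((Q ** P ** Q) *v x) = x \<bullet> (Q *v (P *v (Q *v x)))"
    by (simp add: matrix_vector_mul_assoc matrix_mul_assoc)
  also have "\<dots> = (Q *v x) \<bullet> (P *v (Q *v x))" by (rule inner_symmetric_matrix_vector[OF Q])
  finally show "0 \<le> x \<bullet> ((Q ** P ** Q) *v x)" using psd_mat_nonneg[OF P] by simp
qed

lemma pd_mat_congruence:
  fixes P Q :: "real^'n^'n"
  assumes P: "pd_mat P" and Q: "transpose Q = Q" "invertible Q"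
  shows "pd_mat (Q ** P ** Q)"
  using psd_mat_congruence[OF pd_imp_psd_mat[OF P] Q(1)] pd_mat_invertible[OF P] Q(2)
  by (simp add: pd_mat_iff_psd_invertible invertible_mult)

lemma pd_mat_matrix_inv:
  fixes A :: "real^'n^'n"
  assumes A: "pd_mat A"
  shows "pd_mat (matrix_inv A)"
proof -
  have inv: "invertible A" using A by (rule pd_mat_invertible)
  have sym: "transpose (matrix_inv A) = matrix_inv A"
    by (rule matrix_inv_transpose_eq[OF pd_mat_transpose[OF A] inv])
  have "pd_mat (matrix_inv A ** A ** matrix_inv A)"
    by (rule pd_mat_congruence[OF A sym invertible_matrix_inv[OF inv]])
  thus ?thesis by (simp add: matrix_inv_left[OF inv])
qed

lemma pd_mat_msqrt:
  fixes A :: "real^'n^'n"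
  assumes A: "pd_mat A"
  shows "pd_mat (msqrt A)"
proof -
  have "msqrt A ** (msqrt A ** matrix_inv A) = mat 1"
    using msqrt_square[OF pd_imp_psd_mat[OF A]] matrix_inv_right[OF pd_mat_invertible[OF A]]
    by (simp add: matrix_mul_assoc)
  hence "invertible (msqrt A)" using invertible_right_inverse by blast
  thus ?thesis using psd_mat_msqrt[OF pd_imp_psd_mat[OF A]] by (simp add: pd_mat_iff_psd_invertible)
qed

text \<open>The geometric mean \<open>W = C # D\<close> solves the Riccati equation \<open>W C\<^sup>-\<^sup>1 W = D\<close>: with
  \<open>H = C\<^sup>1\<^sup>/\<^sup>2\<close> one has \<open>H C\<^sup>-\<^sup>1 H = 1\<close>, so the equation collapses to the definition of the middle
  square root.\<close>

lemma
  fixes C D :: "real^'n^'n"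
  assumes C: "pd_mat C" and D: "pd_mat D"
  shows pd_mat_gmean: "pd_mat (gmean C D)"
    and gmean_riccati: "gmean C D ** matrix_inv C ** gmean C D = D"
proof -
  define H where "H = msqrt C"
  define Hi where "Hi = matrix_inv H"
  define M where "M = msqrt (Hi ** D ** Hi)"
  have H: "pd_mat H" "H ** H = C" unfolding H_def
    using pd_mat_msqrt[OF C] msqrt_square[OF pd_imp_psd_mat[OF C]] by auto
  have Hinv: "invertible H" by (rule pd_mat_invertible[OF H(1)])
  have HHi: "H ** Hi = mat 1" and HiH: "Hi ** H = mat 1"
    unfolding Hi_def using matrix_inv_right[OF Hinv] matrix_inv_left[OF Hinv] by auto
  have HiD: "pd_mat (Hi ** D ** Hi)" unfolding Hi_def
    using pd_mat_congruence[OF D matrix_inv_transpose_eq[OF pd_mat_transpose[OF H(1)] Hinv]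
        invertible_matrix_inv[OF Hinv]] .
  have M: "pd_mat M" "M ** M = Hi ** D ** Hi" unfolding M_def
    using pd_mat_msqrt[OF HiD] msqrt_square[OF pd_imp_psd_mat[OF HiD]] by auto
  have gm: "gmean C D = H ** M ** H" unfolding gmean_def Let_def H_def Hi_def M_def ..
  show "pd_mat (gmean C D)"
    unfolding gm by (rule pd_mat_congruence[OF M(1) pd_mat_transpose[OF H(1)] Hinv])
  have "C ** (Hi ** Hi) = H ** (H ** Hi) ** Hi" by (simp add: H(2)[symmetric] matrix_mul_assoc)
  hence "matrix_inv C = Hi ** Hi" using HHi by (simp add: matrix_inv_unique)
  hence HCH: "H ** matrix_inv C ** H = mat 1" using HiH HHi by (simp add: matrix_mul_assoc)
  have "gmean C D ** matrix_inv C ** gmean C D = H ** M ** (H ** matrix_inv C ** H) ** M ** H"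
    unfolding gm by (simp add: matrix_mul_assoc)
  also have "\<dots> = H ** (M ** M) ** H" by (simp add: HCH matrix_mul_assoc)
  also have "\<dots> = (H ** Hi) ** D ** (Hi ** H)" unfolding M(2) by (simp add: matrix_mul_assoc)
  also have "\<dots> = D" using HHi HiH by simp
  finally show "gmean C D ** matrix_inv C ** gmean C D = D" .
qed

section \<open>The trace inner product and the Schur product theorem\<close>

lemma trace_mult_symmetric:
  fixes X Y :: "real^'n^'n"
  assumes "transpose Y = Y"
  shows "trace (X ** Y) = X \<bullet> Y"
proof -
  have "trace (X ** Y) = (\<Sum>i\<in>UNIV. \<Sum>k\<in>UNIV. X$i$k * Y$k$i)"
    by (simp add: trace_def matrix_matrix_mult_def)
  thus ?thesis using symmetric_matrix_entry[OF assms] by (simp add: inner_vec_def)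
qed

lemma diagonal_entry_quadratic_form: "(M::real^'n^'n)$i$i = axis i 1 \<bullet> (M *v axis i 1)"
  by (simp add: matrix_vector_mult_basis inner_axis' column_def)

lemma inner_psd_eq_trace_congruence:
  fixes P Q :: "real^'n^'n"
  assumes Q: "psd_mat Q"
  shows "P \<bullet> Q = trace (msqrt Q ** P ** msqrt Q)"
proof -
  have "P \<bullet> Q = trace ((P ** msqrt Q) ** msqrt Q)"
    using trace_mult_symmetric[OF psd_mat_transpose[OF Q], of P] msqrt_square[OF Q]
    by (metis matrix_mul_assoc)
  also have "\<dots> = trace (msqrt Q ** P ** msqrt Q)" by (metis trace_mul_sym matrix_mul_assoc)
  finally show ?thesis .
qed

lemma psd_mat_inner_nonneg:
  fixes P Q :: "real^'n^'n"
  assumes P: "psd_mat P" and Q: "psd_mat Q"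
  shows "0 \<le> P \<bullet> Q"
proof -
  have "psd_mat (msqrt Q ** P ** msqrt Q)"
    by (rule psd_mat_congruence[OF P psd_mat_transpose[OF psd_mat_msqrt[OF Q]]])
  thus ?thesis unfolding inner_psd_eq_trace_congruence[OF Q] trace_def
    by (simp add: sum_nonneg diagonal_entry_quadratic_form psd_mat_nonneg)
qed

lemma pd_mat_inner_pos:
  fixes P Q :: "real^'n^'n"
  assumes P: "pd_mat P" and Q: "pd_mat Q"
  shows "0 < P \<bullet> Q"
proof -
  have R: "pd_mat (msqrt Q)" by (rule pd_mat_msqrt[OF Q])
  have "pd_mat (msqrt Q ** P ** msqrt Q)"
    by (rule pd_mat_congruence[OF P pd_mat_transpose[OF R] pd_mat_invertible[OF R]])
  hence "0 < (msqrt Q ** P ** msqrt Q)$i$i" for i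
    unfolding diagonal_entry_quadratic_form pd_mat_def by (simp add: axis_eq_0_iff)
  thus ?thesis unfolding inner_psd_eq_trace_congruence[OF pd_imp_psd_mat[OF Q]] trace_def
    by (simp add: sum_pos)
qed

lemma inner_matrix_vector_sum: "x \<bullet> ((M::real^'n^'n) *v y) = (\<Sum>i\<in>UNIV. \<Sum>j\<in>UNIV. x$i * M$i$j * y$j)"
  by (simp add: inner_vec_def matrix_vector_mult_def sum_distrib_left mult.assoc)

lemma schur_quadratic_form:
  fixes A B R :: "real^'n^'n"
  assumes R: "transpose R = R" and B: "R ** R = B"
  shows "x \<bullet> (schur A B *v x) = (\<Sum>k\<in>UNIV. (\<chi> i. x$i * R$k$i) \<bullet> (A *v (\<chi> i. x$i * R$k$i)))"
proof -
  have B_entry: "B$i$j = (\<Sum>k\<in>UNIV. R$k$i * R$k$j)" for i j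
    using B symmetric_matrix_entry[OF R] by (auto simp: matrix_matrix_mult_def)
  have "x \<bullet> (schur A B *v x) = (\<Sum>i\<in>UNIV. \<Sum>j\<in>UNIV. \<Sum>k\<in>UNIV. (x$i * R$k$i) * A$i$j * (x$j * R$k$j))"
    by (simp add: inner_matrix_vector_sum schur_def B_entry sum_distrib_left sum_distrib_right mult_ac)
  also have "\<dots> = (\<Sum>i\<in>UNIV. \<Sum>k\<in>UNIV. \<Sum>j\<in>UNIV. (x$i * R$k$i) * A$i$j * (x$j * R$k$j))"
    by (rule sum.cong[OF refl], rule sum.swap)
  also have "\<dots> = (\<Sum>k\<in>UNIV. \<Sum>i\<in>UNIV. \<Sum>j\<in>UNIV. (x$i * R$k$i) * A$i$j * (x$j * R$k$j))"
    by (rule sum.swap)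
  finally show ?thesis by (simp add: inner_matrix_vector_sum)
qed

lemma schur_transpose:
  assumes "transpose A = A" and "transpose B = B"
  shows "transpose (schur A B) = schur A B"
  using symmetric_matrix_entry[OF assms(1)] symmetric_matrix_entry[OF assms(2)]
  by (simp add: schur_def transpose_def vec_eq_iff)

lemma pd_mat_schur:
  fixes A B :: "real^'n^'n"
  assumes A: "pd_mat A" and B: "pd_mat B"
  shows "pd_mat (schur A B)"
  unfolding pd_mat_def sym_mat_def
proof (intro conjI allI impI)
  show "transpose (schur A B) = schur A B"
    by (rule schur_transpose[OF pd_mat_transpose[OF A] pd_mat_transpose[OF B]])
  define R where "R = msqrt B"
  have R: "psd_mat R" "R ** R = B"
    unfolding R_def using psd_mat_msqrt msqrt_square pd_imp_psd_mat[OF B] by auto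
  fix x :: "real^'n" assume "x \<noteq> 0"
  then obtain i where xi: "x$i \<noteq> 0" by (auto simp: vec_eq_iff)
  define u where "u k = (\<chi> i. x$i * R$k$i)" for k
  have "\<exists>k. u k \<noteq> 0"
  proof (rule ccontr)
    assume "\<not> (\<exists>k. u k \<noteq> 0)"
    hence "(u k)$i = 0" for k by simp
    hence "R$k$i = 0" for k using xi by (simp add: u_def)
    hence "R *v axis i 1 = 0" by (simp add: matrix_vector_mult_basis column_def vec_eq_iff)
    hence "axis i 1 \<bullet> (B *v axis i 1) = 0" by (simp add: R(2)[symmetric] matrix_vector_mul_assoc[symmetric])
    moreover have "0 < axis i 1 \<bullet> (B *v axis i 1)"
      using B axis_eq_0_iff[of i "1::real"] unfolding pd_mat_def by simp
    ultimately show False by simp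
  qed
  then obtain k where "u k \<noteq> 0" by blast
  hence "0 < u k \<bullet> (A *v u k)" using A unfolding pd_mat_def by blast
  moreover have "0 \<le> u l \<bullet> (A *v u l)" for l using psd_mat_nonneg[OF pd_imp_psd_mat[OF A]] .
  ultimately have "0 < (\<Sum>l\<in>UNIV. u l \<bullet> (A *v u l))" by (intro sum_pos2[where i=k]) auto
  thus "0 < x \<bullet> (schur A B *v x)"
    unfolding schur_quadratic_form[OF psd_mat_transpose[OF R(1)] R(2)] u_def .
qed

lemma psd_mat_add: "psd_mat (A::real^'n^'n) \<Longrightarrow> psd_mat B \<Longrightarrow> psd_mat (A + B)"
  unfolding psd_mat_def sym_mat_def
  by (simp add: transpose_add_matrix matrix_vector_mult_add_rdistrib inner_add_right)

lemma psd_mat_scaleR: "0 \<le> c \<Longrightarrow> psd_mat (A::real^'n^'n) \<Longrightarrow> psd_mat (c *\<^sub>R A)"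
  unfolding psd_mat_def sym_mat_def
  by (simp add: transpose_scalar scaleR_matrix_vector_assoc[symmetric])

lemma psd_mat_sum: "(\<And>i. i \<in> I \<Longrightarrow> psd_mat (M i)) \<Longrightarrow> psd_mat (\<Sum>i\<in>I. (M i :: real^'n^'n))"
proof (induction I rule: infinite_finite_induct)
  case (infinite I)
  show ?case unfolding psd_mat_def sym_mat_def by (simp add: infinite transpose_def vec_eq_iff)
next
  case empty
  show ?case unfolding psd_mat_def sym_mat_def by (simp add: transpose_def vec_eq_iff)
qed (simp add: psd_mat_add)

lemma pd_mat_add_psd: "pd_mat (A::real^'n^'n) \<Longrightarrow> psd_mat B \<Longrightarrow> pd_mat (A + B)"
  unfolding pd_mat_def psd_mat_def sym_mat_def
  by (simp add: transpose_add_matrix matrix_vector_mult_add_rdistrib inner_add_right add_pos_nonneg)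

lemma pd_mat_scaleR: "0 < c \<Longrightarrow> pd_mat (A::real^'n^'n) \<Longrightarrow> pd_mat (c *\<^sub>R A)"
  unfolding pd_mat_def sym_mat_def
  by (simp add: transpose_scalar scaleR_matrix_vector_assoc[symmetric])

lemma pd_mat_sum:
  assumes "finite I" "I \<noteq> {}" "\<And>i. i \<in> I \<Longrightarrow> pd_mat (M i)"
  shows "pd_mat (\<Sum>i\<in>I. (M i :: real^'n^'n))"
  using assms
proof (induction I rule: finite_ne_induct)
  case (insert x F)
  have "pd_mat (M x)" "psd_mat (\<Sum>i\<in>F. M i)" using insert pd_imp_psd_mat by auto
  thus ?case using insert.hyps pd_mat_add_psd by simp
qed simp

lemma pd_mat_coercive:
  fixes Z :: "real^'n^'n"
  assumes Z: "pd_mat Z"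
  shows "\<exists>m>0. \<forall>x. m * (x \<bullet> x) \<le> x \<bullet> (Z *v x)"
proof -
  let ?K = "sphere (0::real^'n) 1"
  have "axis undefined (1::real) \<in> ?K" by simp
  hence neK: "?K \<noteq> {}" by blast
  have cont: "continuous_on ?K (\<lambda>y. y \<bullet> (Z *v y))"
    by (intro continuous_intros linear_continuous_on bounded_linear.linear matrix_vector_mul_bounded_linear)
      (simp add: bounded_linear.continuous_on continuous_on_id)
  obtain u where u: "u \<in> ?K" and umin: "\<And>y. y \<in> ?K \<Longrightarrow> u \<bullet> (Z *v u) \<le> y \<bullet> (Z *v y)"
    using continuous_attains_inf[OF compact_sphere neK cont] by blast
  define m where "m = u \<bullet> (Z *v u)"
  have "u \<noteq> 0" using u by auto
  hence "m > 0" using Z unfolding pd_mat_def m_def by blast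
  moreover have "m * (x \<bullet> x) \<le> x \<bullet> (Z *v x)" for x
  proof (cases "x = 0")
    case False
    have "x /\<^sub>R norm x \<in> ?K" using False by simp
    hence "m \<le> (x /\<^sub>R norm x) \<bullet> (Z *v (x /\<^sub>R norm x))" using umin m_def by blast
    moreover have "(x /\<^sub>R norm x) \<bullet> (Z *v (x /\<^sub>R norm x)) = (x \<bullet> (Z *v x)) / (x \<bullet> x)"
      by (simp add: matrix_vector_mult_scaleR dot_square_norm power2_eq_square divide_inverse)
    ultimately show ?thesis using False by (simp add: le_divide_eq)
  qed simp
  ultimately show ?thesis by blast
qed

lemma pd_mat_dominates_symmetric:
  fixes Z Y :: "real^'n^'n"
  assumes Z: "pd_mat Z" and Y: "transpose Y = Y"
  shows "\<exists>c. psd_mat (c *\<^sub>R Z - Y) \<and> psd_mat (c *\<^sub>R Z + Y)"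
proof -
  obtain m where m: "m > 0" "\<And>x. m * (x \<bullet> x) \<le> x \<bullet> (Z *v x)" using pd_mat_coercive[OF Z] by blast
  obtain K where K: "K > 0" "\<And>x. norm (Y *v x) \<le> norm x * K"
    using bounded_linear.pos_bounded[OF matrix_vector_mul_bounded_linear[of Y]] by blast
  have bound: "\<bar>x \<bullet> (Y *v x)\<bar> \<le> K / m * (x \<bullet> (Z *v x))" for x
  proof -
    have "\<bar>x \<bullet> (Y *v x)\<bar> \<le> norm x * (norm x * K)"
      using Cauchy_Schwarz_ineq2[of x "Y *v x"] K(2)[of x] by (meson mult_left_mono norm_ge_zero order_trans)
    also have "\<dots> = K / m * (m * (x \<bullet> x))" using m(1) by (simp add: dot_square_norm power2_eq_square)
    also have "\<dots> \<le> K / m * (x \<bullet> (Z *v x))" using m K(1) by (intro mult_left_mono) auto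
    finally show ?thesis .
  qed
  have "0 \<le> x \<bullet> (((K / m) *\<^sub>R Z - Y) *v x)" "0 \<le> x \<bullet> (((K / m) *\<^sub>R Z + Y) *v x)" for x
    using bound[of x]
    by (simp_all add: matrix_vector_mult_diff_rdistrib matrix_vector_mult_add_rdistrib inner_diff_right
        inner_add_right scaleR_matrix_vector_assoc[symmetric] abs_le_iff)
  moreover have "transpose ((K / m) *\<^sub>R Z - Y) = (K / m) *\<^sub>R Z - Y"
    "transpose ((K / m) *\<^sub>R Z + Y) = (K / m) *\<^sub>R Z + Y"
    by (simp_all add: transpose_diff_matrix transpose_add_matrix transpose_scalar pd_mat_transpose[OF Z] Y)
  ultimately have "psd_mat ((K / m) *\<^sub>R Z - Y) \<and> psd_mat ((K / m) *\<^sub>R Z + Y)"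
    unfolding psd_mat_def sym_mat_def by blast
  thus ?thesis by blast
qed

section \<open>Positive maps with a positive definite fixed point\<close>

lemma funpow_selfadjoint:
  fixes T :: "'a::real_inner \<Rightarrow> 'a"
  assumes selfadj: "\<And>x z. T x \<bullet> z = x \<bullet> T z"
  shows "(T ^^ n) x \<bullet> z = x \<bullet> (T ^^ n) z"
proof (induction n arbitrary: z)
  case (Suc n)
  have "(T ^^ Suc n) x \<bullet> z = (T ^^ n) x \<bullet> T z" by (simp add: selfadj)
  also have "\<dots> = x \<bullet> (T ^^ Suc n) z" by (simp add: Suc.IH funpow_Suc_right del: funpow.simps)
  finally show ?case .
qed simp

text \<open>A bounded log-convex sequence cannot start to grow: \<open>a\<^sub>1 > a\<^sub>0\<close> would force
  \<open>a\<^sub>n \<ge> (a\<^sub>1 / a\<^sub>0)\<^sup>n a\<^sub>0\<close>.\<close>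

lemma log_convex_bounded_imp_first_step_le:
  fixes a :: "nat \<Rightarrow> real"
  assumes nonneg: "\<And>n. 0 \<le> a n" and log_convex: "\<And>n. (a (Suc n))^2 \<le> a n * a (Suc (Suc n))"
    and bounded: "\<And>n. a n \<le> M"
  shows "a 1 \<le> a 0"
proof (rule ccontr)
  assume "\<not> a 1 \<le> a 0"
  hence gt: "a 0 < a 1" by simp
  have a0: "0 < a 0"
  proof (rule ccontr)
    assume "\<not> 0 < a 0"
    hence "a 0 = 0" using nonneg[of 0] by simp
    thus False using log_convex[of 0] gt by simp
  qed
  define r where "r = a 1 / a 0"
  have r: "1 < r" unfolding r_def using gt a0 by simp
  have grow: "r * a n \<le> a (Suc n) \<and> r^n * a 0 \<le> a n" for n
  proof (induction n)
    case 0 show ?case unfolding r_def using a0 by simp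
  next
    case (Suc n)
    hence step: "r * a n \<le> a (Suc n)" and geom: "r^n * a 0 \<le> a n" by auto
    have "0 < r^n * a 0" using r a0 by simp
    hence an: "0 < a n" using geom by linarith
    have "r^Suc n * a 0 = r * (r^n * a 0)" by simp
    also have "\<dots> \<le> r * a n" using geom r by simp
    also have "\<dots> \<le> a (Suc n)" by (rule step)
    moreover have "a n * (r * a (Suc n)) \<le> a n * a (Suc (Suc n))"
    proof -
      have "a n * (r * a (Suc n)) = (r * a n) * a (Suc n)" by simp
      also have "\<dots> \<le> a (Suc n) * a (Suc n)" using step nonneg by (simp add: mult_right_mono)
      also have "\<dots> \<le> a n * a (Suc (Suc n))" using log_convex[of n] by (simp add: power2_eq_square)
      finally show ?thesis .
    qed
    hence "r * a (Suc n) \<le> a (Suc (Suc n))" using an by simp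
    ultimately show ?case by simp
  qed
  obtain N where "M / a 0 < r^N" using real_arch_pow[OF r] by blast
  hence "M < r^N * a 0" using a0 by (simp add: divide_less_eq)
  thus False using grow[of N] bounded[of N] by linarith
qed

lemma selfadjoint_inner_le_of_bounded_orbit:
  fixes T :: "'a::real_inner \<Rightarrow> 'a"
  assumes selfadj: "\<And>x z. T x \<bullet> z = x \<bullet> T z" and bounded: "\<And>n. (T ^^ n) y \<bullet> y \<le> K"
  shows "T y \<bullet> y \<le> y \<bullet> y"
proof -
  define a where "a n = norm ((T ^^ n) y)" for n
  have "(a n)^2 \<le> K" for n
  proof -
    have "(a n)^2 = (T ^^ n) ((T ^^ n) y) \<bullet> y"
      unfolding a_def power2_norm_eq_inner by (simp add: funpow_selfadjoint[OF selfadj])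
    thus ?thesis using bounded[of "n + n"] by (simp add: funpow_add)
  qed
  hence "a n \<le> sqrt K" for n by (simp add: real_le_rsqrt)
  moreover have "(a (Suc n))^2 \<le> a n * a (Suc (Suc n))" for n
  proof -
    have "(a (Suc n))^2 = (T ^^ n) y \<bullet> (T ^^ Suc (Suc n)) y"
      unfolding a_def power2_norm_eq_inner by (simp add: selfadj)
    also have "\<dots> \<le> a n * a (Suc (Suc n))" unfolding a_def by (rule norm_cauchy_schwarz)
    finally show ?thesis .
  qed
  ultimately have "a 1 \<le> a 0" by (intro log_convex_bounded_imp_first_step_le) (auto simp: a_def)
  have "T y \<bullet> y \<le> a 1 * a 0" unfolding a_def by (simp add: norm_cauchy_schwarz)
  also have "\<dots> \<le> a 0 * a 0" using \<open>a 1 \<le> a 0\<close> by (simp add: a_def mult_right_mono)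
  also have "\<dots> = y \<bullet> y" by (simp add: a_def dot_square_norm power2_eq_square)
  finally show ?thesis .
qed

lemma positive_map_with_pd_fixed_point_contracts:
  fixes B :: "'i \<Rightarrow> real^'n^'n" and Z Y :: "real^'n^'n"
  assumes B: "\<And>i. i \<in> I \<Longrightarrow> psd_mat (B i)" and Z: "pd_mat Z"
    and fixed: "(\<Sum>i\<in>I. (Z \<bullet> B i) *\<^sub>R B i) = Z" and Y: "transpose Y = Y"
  shows "(\<Sum>i\<in>I. (Y \<bullet> B i)^2) \<le> Y \<bullet> Y"
proof -
  define T where "T X = (\<Sum>i\<in>I. (X \<bullet> B i) *\<^sub>R B i)" for X
  have T_inner: "T X \<bullet> W = (\<Sum>i\<in>I. (X \<bullet> B i) * (W \<bullet> B i))" for X W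
    unfolding T_def inner_sum_left by (simp add: inner_commute)
  have selfadj: "T X \<bullet> W = X \<bullet> T W" for X W
    using T_inner[of X W] T_inner[of W X] by (simp add: inner_commute mult.commute)
  have T_linear: "T (c *\<^sub>R X + d *\<^sub>R X') = c *\<^sub>R T X + d *\<^sub>R T X'" for c d X X'
    by (simp add: T_def inner_add_left scaleR_add_left sum.distrib scaleR_sum_right)
  have TZ: "T Z = Z" using fixed unfolding T_def .
  have T_psd: "psd_mat (T X)" if "psd_mat X" for X
    unfolding T_def using that B by (intro psd_mat_sum psd_mat_scaleR psd_mat_inner_nonneg) auto
  obtain c where c: "psd_mat (c *\<^sub>R Z - Y)" "psd_mat (c *\<^sub>R Z + Y)"
    using pd_mat_dominates_symmetric[OF Z Y] by blast
  have orbit: "psd_mat (c *\<^sub>R Z - (T ^^ n) Y) \<and> psd_mat (c *\<^sub>R Z + (T ^^ n) Y)" for n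
  proof (induction n)
    case (Suc n)
    hence "psd_mat (T (c *\<^sub>R Z - (T ^^ n) Y))" "psd_mat (T (c *\<^sub>R Z + (T ^^ n) Y))"
      using T_psd by auto
    thus ?case using T_linear[of c Z "-1" "(T ^^ n) Y"] T_linear[of c Z 1 "(T ^^ n) Y"] TZ by simp
  qed (simp add: c)
  have "(T ^^ n) Y \<bullet> Y \<le> c * (c * (Z \<bullet> Z))" for n
  proof -
    have "0 \<le> (c *\<^sub>R Z - (T ^^ n) Y) \<bullet> (c *\<^sub>R Z + Y)" "0 \<le> (c *\<^sub>R Z + (T ^^ n) Y) \<bullet> (c *\<^sub>R Z - Y)"
      using orbit[of n] c by (auto intro: psd_mat_inner_nonneg)
    thus ?thesis by (simp add: inner_diff_left inner_add_left inner_diff_right inner_add_right inner_commute)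
  qed
  hence "T Y \<bullet> Y \<le> Y \<bullet> Y" by (rule selfadjoint_inner_le_of_bounded_orbit[OF selfadj])
  thus ?thesis by (simp add: T_inner power2_eq_square)
qed

section \<open>The majorization-minimization step\<close>

text \<open>With \<open>H = \<Sum> t\<^sub>i B\<^sub>i\<close>, both sides expand around \<open>\<Sum> t\<^sub>i\<^sup>2\<close>; their difference is at least
  \<open>\<parallel>Z - H\<parallel>\<^sup>2\<close>, because the fixed point gives \<open>\<Sum> \<langle>Z, B\<^sub>i\<rangle>\<^sup>2 = \<parallel>Z\<parallel>\<^sup>2\<close> and the contraction gives
  \<open>\<Sum> \<langle>H, B\<^sub>i\<rangle>\<^sup>2 \<le> \<parallel>H\<parallel>\<^sup>2\<close>.\<close>

lemma fixed_point_step_decreases: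
  fixes B :: "'i \<Rightarrow> real^'n^'n" and t :: "'i \<Rightarrow> real" and Z :: "real^'n^'n"
  assumes B: "\<And>i. i \<in> I \<Longrightarrow> psd_mat (B i)" and Z: "pd_mat Z"
    and fixed: "(\<Sum>i\<in>I. (Z \<bullet> B i) *\<^sub>R B i) = Z"
  shows "(\<Sum>i\<in>I. (t i - (\<Sum>k\<in>I. t k *\<^sub>R B k) \<bullet> B i)^2) \<le> (\<Sum>i\<in>I. (t i - Z \<bullet> B i)^2)"
proof -
  define H where "H = (\<Sum>k\<in>I. t k *\<^sub>R B k)"
  have "transpose H = H"
    unfolding H_def transpose_sum_matrix by (simp add: transpose_scalar psd_mat_transpose[OF B])
  from positive_map_with_pd_fixed_point_contracts[OF B Z fixed this]
  have contract: "(\<Sum>i\<in>I. (H \<bullet> B i)^2) \<le> H \<bullet> H" .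
  have tH: "(\<Sum>i\<in>I. t i * (X \<bullet> B i)) = X \<bullet> H" for X
    unfolding H_def by (simp add: inner_sum_right)
  have "Z \<bullet> Z = Z \<bullet> (\<Sum>i\<in>I. (Z \<bullet> B i) *\<^sub>R B i)" using fixed by simp
  hence ZZ: "(\<Sum>i\<in>I. (Z \<bullet> B i)^2) = Z \<bullet> Z" by (simp add: inner_sum_right power2_eq_square)
  have expand: "(\<Sum>i\<in>I. (t i - X \<bullet> B i)^2)
      = (\<Sum>i\<in>I. (t i)^2) - 2 * (\<Sum>i\<in>I. t i * (X \<bullet> B i)) + (\<Sum>i\<in>I. (X \<bullet> B i)^2)" for X
    by (simp add: power2_diff sum.distrib sum_subtractf sum_distrib_left mult.assoc)
  have "(Z - H) \<bullet> (Z - H) = Z \<bullet> Z - 2 * (Z \<bullet> H) + H \<bullet> H"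
    by (simp add: inner_diff_left inner_diff_right inner_commute)
  moreover have "0 \<le> (Z - H) \<bullet> (Z - H)" by simp
  ultimately show ?thesis
    unfolding H_def[symmetric] expand tH ZZ using contract by linarith
qed

lemma matrix_mult_sum_scaleR:
  fixes P Q :: "real^'n^'n" and M :: "'i \<Rightarrow> real^'n^'n"
  shows "P ** (\<Sum>i\<in>I. c i *\<^sub>R M i) ** Q = (\<Sum>i\<in>I. c i *\<^sub>R (P ** M i ** Q))"
proof (induction I rule: infinite_finite_induct)
  case (insert x F)
  have "(A + A') ** Q = A ** Q + A' ** Q" for A A' :: "real^'n^'n"
    by (simp add: matrix_matrix_mult_def vec_eq_iff sum.distrib distrib_right)
  thus ?case using insert
    by (simp add: matrix_add_ldistrib matrix_scalar_ac scalar_matrix_assoc[symmetric])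
qed simp_all

lemma inner_congruence:
  fixes X A P Pi :: "real^'n^'n"
  assumes A: "transpose A = A" and P: "transpose P = P" and PiP: "Pi ** P = mat 1"
  shows "(Pi ** X ** Pi) \<bullet> (P ** A ** P) = X \<bullet> A"
proof -
  have PPi: "P ** Pi = mat 1" using PiP matrix_left_right_inverse by blast
  have "transpose (P ** A ** P) = P ** A ** P" by (simp add: matrix_transpose_mul A P matrix_mul_assoc)
  hence "(Pi ** X ** Pi) \<bullet> (P ** A ** P) = trace ((Pi ** X ** Pi) ** (P ** A ** P))"
    by (rule trace_mult_symmetric[symmetric])
  also have "(Pi ** X ** Pi) ** (P ** A ** P) = Pi ** (X ** A ** P)"
    using PiP by (simp add: matrix_mul_assoc) (simp add: matrix_mul_assoc[symmetric])
  also have "trace (Pi ** (X ** A ** P)) = trace (X ** A ** P ** Pi)" by (rule trace_mul_sym)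
  also have "X ** A ** P ** Pi = X ** A" using PPi by (simp add: matrix_mul_assoc[symmetric])
  finally show ?thesis by (simp add: trace_mult_symmetric[OF A])
qed

lemma riccati_update_decreases:
  fixes A :: "'i \<Rightarrow> real^'n^'n" and t :: "'i \<Rightarrow> real" and W Cold :: "real^'n^'n"
  assumes A: "\<And>i. i \<in> I \<Longrightarrow> psd_mat (A i)" and Cold: "pd_mat Cold" and W: "pd_mat W"
    and riccati: "W ** (\<Sum>i\<in>I. (Cold \<bullet> A i) *\<^sub>R A i) ** W = Cold"
  shows "(\<Sum>i\<in>I. (t i - (W ** (\<Sum>k\<in>I. t k *\<^sub>R A k) ** W) \<bullet> A i)^2) \<le> (\<Sum>i\<in>I. (t i - Cold \<bullet> A i)^2)"
proof -
  define P where "P = msqrt W"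
  define Pi where "Pi = matrix_inv P"
  have P: "pd_mat P" "P ** P = W"
    unfolding P_def using pd_mat_msqrt[OF W] msqrt_square[OF pd_imp_psd_mat[OF W]] by auto
  have Pinv: "invertible P" and Psym: "transpose P = P"
    using pd_mat_invertible pd_mat_transpose P(1) by auto
  have PiP: "Pi ** P = mat 1" and PPi: "P ** Pi = mat 1"
    unfolding Pi_def using matrix_inv_left[OF Pinv] matrix_inv_right[OF Pinv] by auto
  have Pi: "pd_mat Pi" unfolding Pi_def by (rule pd_mat_matrix_inv[OF P(1)])
  define B where "B i = P ** A i ** P" for i
  define Z where "Z = Pi ** Cold ** Pi"
  have change: "X \<bullet> A i = (Pi ** X ** Pi) \<bullet> B i" if "i \<in> I" for X i
    unfolding B_def using inner_congruence[OF psd_mat_transpose[OF A[OF that]] Psym PiP] by simp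
  have unconj: "Pi ** (W ** X ** W) ** Pi = P ** X ** P" for X
  proof -
    have "Pi ** (W ** X ** W) ** Pi = (Pi ** P) ** (P ** X ** P) ** (P ** Pi)"
      unfolding P(2)[symmetric] by (simp add: matrix_mul_assoc)
    thus ?thesis by (simp add: PiP PPi)
  qed
  have ZB: "Z \<bullet> B i = Cold \<bullet> A i" if "i \<in> I" for i
    using change[OF that, of Cold] unfolding Z_def by simp
  have "(\<Sum>i\<in>I. (Z \<bullet> B i) *\<^sub>R B i) = P ** (\<Sum>i\<in>I. (Cold \<bullet> A i) *\<^sub>R A i) ** P"
    unfolding matrix_mult_sum_scaleR B_def[symmetric] using ZB by (intro sum.cong) auto
  also have "\<dots> = Z" unfolding Z_def unconj[symmetric] riccati ..
  finally have fixed: "(\<Sum>i\<in>I. (Z \<bullet> B i) *\<^sub>R B i) = Z" .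
  have "psd_mat (B i)" if "i \<in> I" for i
    unfolding B_def by (rule psd_mat_congruence[OF A[OF that] Psym])
  moreover have "pd_mat Z"
    unfolding Z_def by (rule pd_mat_congruence[OF Cold pd_mat_transpose[OF Pi] pd_mat_invertible[OF Pi]])
  ultimately have decrease:
    "(\<Sum>i\<in>I. (t i - (\<Sum>k\<in>I. t k *\<^sub>R B k) \<bullet> B i)^2) \<le> (\<Sum>i\<in>I. (t i - Z \<bullet> B i)^2)"
    using fixed_point_step_decreases[OF _ _ fixed] by blast
  have "(W ** (\<Sum>k\<in>I. t k *\<^sub>R A k) ** W) \<bullet> A i = (\<Sum>k\<in>I. t k *\<^sub>R B k) \<bullet> B i" if "i \<in> I" for i
    unfolding change[OF that] unconj matrix_mult_sum_scaleR B_def ..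
  hence "(\<Sum>i\<in>I. (t i - (W ** (\<Sum>k\<in>I. t k *\<^sub>R A k) ** W) \<bullet> A i)^2)
      = (\<Sum>i\<in>I. (t i - (\<Sum>k\<in>I. t k *\<^sub>R B k) \<bullet> B i)^2)"
    by (intro sum.cong) auto
  moreover have "(\<Sum>i\<in>I. (t i - Cold \<bullet> A i)^2) = (\<Sum>i\<in>I. (t i - Z \<bullet> B i)^2)"
    using ZB by (intro sum.cong) auto
  ultimately show ?thesis using decrease by simp
qed

lemma sum_UNIV_pairs: "(\<Sum>i\<in>UNIV. \<Sum>j\<in>UNIV. f i j) = (\<Sum>p\<in>UNIV. f (fst p) (snd p))"
  unfolding UNIV_Times_UNIV[symmetric] sum.cartesian_product by (simp add: case_prod_unfold)

theorem mainTheorem6: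
  fixes T :: "'d::finite \<Rightarrow> 'd \<Rightarrow> 'd \<Rightarrow> real"
    and C1 C2 :: "'d \<Rightarrow> real^'r::finite^'r"
    and i3 :: 'd
  assumes T_nonneg: "\<And>i1 i2 i3'. 0 \<le> T i1 i2 i3'"
    and C1_pd: "\<And>i. pd_mat (C1 i)"
    and C2_pd: "\<And>i. pd_mat (C2 i)"
  defines "t \<equiv> (\<lambda>i1 i2. T i1 i2 i3)"
  shows "psd_mat (Aadj C1 C2 t) \<and>
    (\<forall>Cold :: real^'r^'r. pd_mat Cold \<longrightarrow>
      (let W = gmean (matrix_inv (Aadj C1 C2 (Aop C1 C2 Cold))) Cold;
           Cnew = W ** Aadj C1 C2 t ** W
       in psd_mat Cnew \<and>
          sqnorm2 (\<lambda>i1 i2. t i1 i2 - Aop C1 C2 Cnew i1 i2)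
            \<le> sqnorm2 (\<lambda>i1 i2. t i1 i2 - Aop C1 C2 Cold i1 i2)))"
proof -
  define A where "A p = schur (C1 (fst p)) (C2 (snd p))" for p
  have A_pd: "pd_mat (A p)" for p unfolding A_def by (rule pd_mat_schur[OF C1_pd C2_pd])
  have Aop: "Aop C1 C2 X i1 i2 = X \<bullet> A (i1, i2)" for X i1 i2
    using trace_mult_symmetric[OF pd_mat_transpose[OF A_pd[of "(i1, i2)"]]]
    by (simp add: Aop_def tr_inner_def A_def)
  have Aadj: "Aadj C1 C2 y = (\<Sum>p\<in>UNIV. y (fst p) (snd p) *\<^sub>R A p)" for y
    unfolding Aadj_def sum_UNIV_pairs A_def ..
  have sqnorm2: "sqnorm2 v = (\<Sum>p\<in>UNIV. (v (fst p) (snd p))^2)" for v :: "'d \<Rightarrow> 'd \<Rightarrow> real"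
    unfolding sqnorm2_def sum_UNIV_pairs ..
  have t_psd: "psd_mat (Aadj C1 C2 t)"
    unfolding Aadj t_def using T_nonneg A_pd by (intro psd_mat_sum psd_mat_scaleR pd_imp_psd_mat)
  moreover have "psd_mat (W ** Aadj C1 C2 t ** W) \<and>
      sqnorm2 (\<lambda>i1 i2. t i1 i2 - Aop C1 C2 (W ** Aadj C1 C2 t ** W) i1 i2)
        \<le> sqnorm2 (\<lambda>i1 i2. t i1 i2 - Aop C1 C2 Cold i1 i2)"
    if Cold: "pd_mat Cold" and W_eq: "W = gmean (matrix_inv (Aadj C1 C2 (Aop C1 C2 Cold))) Cold"
    for Cold W
  proof -
    have "pd_mat (Aadj C1 C2 (Aop C1 C2 Cold))"
      unfolding Aadj Aop using A_pd pd_mat_inner_pos[OF Cold]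
      by (intro pd_mat_sum pd_mat_scaleR) auto
    hence W: "pd_mat W" "W ** (\<Sum>p\<in>UNIV. (Cold \<bullet> A p) *\<^sub>R A p) ** W = Cold"
      using pd_mat_gmean[OF pd_mat_matrix_inv Cold] gmean_riccati[OF pd_mat_matrix_inv Cold]
      unfolding W_eq by (simp_all add: matrix_inv_matrix_inv pd_mat_invertible Aadj Aop)
    show ?thesis
      using psd_mat_congruence[OF t_psd pd_mat_transpose[OF W(1)]]
        riccati_update_decreases[OF pd_imp_psd_mat[OF A_pd] Cold W, of "\<lambda>p. t (fst p) (snd p)"]
      by (simp add: sqnorm2 Aop Aadj)
  qed
  ultimately show ?thesis by (simp add: Let_def)
qed

end
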